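(* Let $\mathcal X\subseteq\mathcal G$ be a class of objects. Let $\mathrm{Filt}(\mathcal X)$ be the class of all $M\in\mathcal G$ admitting a chain $0=M_0\subseteq M_1\subseteq\cdots\subseteq M_k=M$ in which every $M_i$ is a strict subobject of $M$ and every quotient $M_i/M_{i-1}$ ($1\le i\le k$) is a strict quotient of some object of $\mathcal X$. Then $\mathrm{Filt}(\mathcal X)$ is a pseudo-torsion class, and it is contained in every pseudo-torsion class that contains $\mathcal X$; i.e. it is the smallest pseudo-torsion class containing $\mathcal X$.
   Context: Let $\Lambda$ be a finite dimensional algebra over a field and $\mathrm{mod}\text-\Lambda$ the category of finitely generated right $\Lambda$-modules. Fix a torsion class $\mathcal G\subseteq\mathrm{mod}\text-\Lambda$, i.e. a class of modules closed under isomorphisms, extensions and quotients. For $B\in\mathcal G$, a subobject of $B$ is a submodule of $B$ that lies in $\mathcal G$. A subobject $A\subseteq B$ is a strict subobject if $A\cap B'\in\mathcal G$ for every subobject $B'$ of $B$. A strict quotient of $B$ is $B/A$ with $A$ a strict subobject. A short exact sequence $0\to A\to B\to C\to0$ with $A,B,C\in\mathcal G$ is strict exact (and $B$ a strict extension of $A$ by $C$) if the image of $A$ is a strict subobject of $B$. A pseudo-torsion class is a nonempty class $\mathcal P\subseteq\mathcal G$ closed under strict quotients (if $A\in\mathcal P$ then every strict quotient of $A$ is in $\mathcal P$) and strict extensions (if $0\to A\to B\to C\to0$ is strict exact with $A,C\in\mathcal P$ then $B\in\mathcal P$). *)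

theory Defs
  imports Main
begin

text \<open>The algebra Lambda is a type 'r of class ring_1; the ground field is a type 'k of
class field; alg is the structure map k -> Lambda (a unital ring homomorphism into the
centre), and Lambda is finite dimensional: spanned over k by a finite set.\<close>

definition fin_dim_algebra :: "('k::field \<Rightarrow> 'r::ring_1) \<Rightarrow> bool" where
  "fin_dim_algebra alg \<longleftrightarrow>
     alg 1 = 1 \<and>
     (\<forall>a b. alg (a + b) = alg a + alg b) \<and>
     (\<forall>a b. alg (a * b) = alg a * alg b) \<and>
     (\<forall>a x. alg a * x = x * alg a) \<and>
     (\<exists>F. finite F \<and> (\<forall>x. \<exists>c. x = (\<Sum>b\<in>F. alg (c b) * b)))"

record ('r, 'm) rmod =
  mcarrier :: "'m set"
  madd :: "'m \<Rightarrow> 'm \<Rightarrow> 'm"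
  mzero :: 'm
  msmult :: "'m \<Rightarrow> 'r \<Rightarrow> 'm"

definition rmodule :: "('r::ring_1, 'm) rmod \<Rightarrow> bool" where
  "rmodule M \<longleftrightarrow>
     mzero M \<in> mcarrier M \<and>
     (\<forall>x\<in>mcarrier M. \<forall>y\<in>mcarrier M. madd M x y \<in> mcarrier M) \<and>
     (\<forall>x\<in>mcarrier M. \<forall>r. msmult M x r \<in> mcarrier M) \<and>
     (\<forall>x\<in>mcarrier M. \<forall>y\<in>mcarrier M. \<forall>z\<in>mcarrier M.
         madd M (madd M x y) z = madd M x (madd M y z)) \<and>
     (\<forall>x\<in>mcarrier M. \<forall>y\<in>mcarrier M. madd M x y = madd M y x) \<and>
     (\<forall>x\<in>mcarrier M. madd M (mzero M) x = x) \<and>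
     (\<forall>x\<in>mcarrier M. \<exists>y\<in>mcarrier M. madd M x y = mzero M) \<and>
     (\<forall>x\<in>mcarrier M. \<forall>y\<in>mcarrier M. \<forall>r.
         msmult M (madd M x y) r = madd M (msmult M x r) (msmult M y r)) \<and>
     (\<forall>x\<in>mcarrier M. \<forall>r s. msmult M x (r + s) = madd M (msmult M x r) (msmult M x s)) \<and>
     (\<forall>x\<in>mcarrier M. \<forall>r s. msmult M x (r * s) = msmult M (msmult M x r) s) \<and>
     (\<forall>x\<in>mcarrier M. msmult M x 1 = x)"

definition submodule :: "('r::ring_1, 'm) rmod \<Rightarrow> 'm set \<Rightarrow> bool" where
  "submodule M N \<longleftrightarrow>
     N \<subseteq> mcarrier M \<and> mzero M \<in> N \<and>
     (\<forall>x\<in>N. \<forall>y\<in>N. madd M x y \<in> N) \<and>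
     (\<forall>x\<in>N. \<forall>r. msmult M x r \<in> N)"

definition sub :: "('r, 'm) rmod \<Rightarrow> 'm set \<Rightarrow> ('r, 'm) rmod" where
  "sub M N = M\<lparr>mcarrier := N\<rparr>"

definition fin_gen :: "('r::ring_1, 'm) rmod \<Rightarrow> bool" where
  "fin_gen M \<longleftrightarrow> (\<exists>S. finite S \<and> S \<subseteq> mcarrier M \<and>
      (\<forall>N. submodule M N \<and> S \<subseteq> N \<longrightarrow> mcarrier M \<subseteq> N))"

definition fg_module :: "('r::ring_1, 'm) rmod \<Rightarrow> bool" where
  "fg_module M \<longleftrightarrow> rmodule M \<and> fin_gen M"

definition coset :: "('r, 'm) rmod \<Rightarrow> 'm set \<Rightarrow> 'm \<Rightarrow> 'm set" where
  "coset M N x = {madd M x n | n. n \<in> N}"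

definition quot :: "('r, 'm) rmod \<Rightarrow> 'm set \<Rightarrow> ('r, 'm set) rmod" where
  "quot M N = \<lparr> mcarrier = coset M N ` mcarrier M,
                madd = (\<lambda>X Y. {madd M x y | x y. x \<in> X \<and> y \<in> Y}),
                mzero = N,
                msmult = (\<lambda>X r. coset M N (msmult M (SOME x. x \<in> X) r)) \<rparr>"

definition mhom :: "('r, 'a) rmod \<Rightarrow> ('r, 'b) rmod \<Rightarrow> ('a \<Rightarrow> 'b) \<Rightarrow> bool" where
  "mhom M M' f \<longleftrightarrow>
     (\<forall>x\<in>mcarrier M. f x \<in> mcarrier M') \<and>
     (\<forall>x\<in>mcarrier M. \<forall>y\<in>mcarrier M. f (madd M x y) = madd M' (f x) (f y)) \<and>
     (\<forall>x\<in>mcarrier M. \<forall>r. f (msmult M x r) = msmult M' (f x) r)"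

definition miso :: "('r, 'a) rmod \<Rightarrow> ('r, 'b) rmod \<Rightarrow> bool" where
  "miso M M' \<longleftrightarrow> (\<exists>f. mhom M M' f \<and> bij_betw f (mcarrier M) (mcarrier M'))"

definition mkernel :: "('r, 'a) rmod \<Rightarrow> ('r, 'b) rmod \<Rightarrow> ('a \<Rightarrow> 'b) \<Rightarrow> 'a set" where
  "mkernel M M' f = {x \<in> mcarrier M. f x = mzero M'}"

definition short_exact ::
  "('r::ring_1, 'm) rmod \<Rightarrow> ('r, 'm) rmod \<Rightarrow> ('r, 'm) rmod \<Rightarrow> ('m \<Rightarrow> 'm) \<Rightarrow> ('m \<Rightarrow> 'm) \<Rightarrow> bool" where
  "short_exact A B C f g \<longleftrightarrow>
     rmodule A \<and> rmodule B \<and> rmodule C \<and> mhom A B f \<and> mhom B C g \<and>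
     inj_on f (mcarrier A) \<and> g ` mcarrier B = mcarrier C \<and>
     f ` mcarrier A = mkernel B C g"

text \<open>A class of objects is a predicate on modules whose carrier lives in a fixed
universe type 'm.  A module Q of any type lies in the class P (up to isomorphism)
if it is isomorphic to a member of P.\<close>

definition in_class :: "(('r, 'm) rmod \<Rightarrow> bool) \<Rightarrow> ('r, 'a) rmod \<Rightarrow> bool" where
  "in_class P Q \<longleftrightarrow> (\<exists>C. P C \<and> miso C Q)"

definition torsion_class :: "(('r::ring_1, 'm) rmod \<Rightarrow> bool) \<Rightarrow> bool" where
  "torsion_class G \<longleftrightarrow>
     (\<forall>M. G M \<longrightarrow> fg_module M) \<and>
     (\<exists>M. G M) \<and>
     (\<forall>B C. G B \<and> miso B C \<longrightarrow> G C) \<and>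
     (\<forall>A B C f g. G A \<and> G C \<and> short_exact A B C f g \<longrightarrow> G B) \<and>
     (\<forall>B N. G B \<and> submodule B N \<longrightarrow> in_class G (quot B N))"

definition subobject :: "(('r::ring_1, 'm) rmod \<Rightarrow> bool) \<Rightarrow> ('r, 'm) rmod \<Rightarrow> 'm set \<Rightarrow> bool" where
  "subobject G B A \<longleftrightarrow> submodule B A \<and> G (sub B A)"

definition strict_subobject ::
  "(('r::ring_1, 'm) rmod \<Rightarrow> bool) \<Rightarrow> ('r, 'm) rmod \<Rightarrow> 'm set \<Rightarrow> bool" where
  "strict_subobject G B A \<longleftrightarrow> subobject G B A \<and>
     (\<forall>B'. subobject G B B' \<longrightarrow> G (sub B (A \<inter> B')))"

definition strict_exact ::
  "(('r::ring_1, 'm) rmod \<Rightarrow> bool) \<Rightarrow>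
   ('r, 'm) rmod \<Rightarrow> ('r, 'm) rmod \<Rightarrow> ('r, 'm) rmod \<Rightarrow> ('m \<Rightarrow> 'm) \<Rightarrow> ('m \<Rightarrow> 'm) \<Rightarrow> bool" where
  "strict_exact G A B C f g \<longleftrightarrow>
     G A \<and> G B \<and> G C \<and> short_exact A B C f g \<and> strict_subobject G B (f ` mcarrier A)"

definition pseudo_torsion_class ::
  "(('r::ring_1, 'm) rmod \<Rightarrow> bool) \<Rightarrow> (('r, 'm) rmod \<Rightarrow> bool) \<Rightarrow> bool" where
  "pseudo_torsion_class G P \<longleftrightarrow>
     (\<forall>M. P M \<longrightarrow> G M) \<and>
     (\<exists>M. P M) \<and>
     (\<forall>A S. P A \<and> strict_subobject G A S \<longrightarrow> in_class P (quot A S)) \<and>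
     (\<forall>A B C f g. P A \<and> P C \<and> strict_exact G A B C f g \<longrightarrow> P B)"

definition Filt :: "(('r::ring_1, 'm) rmod \<Rightarrow> bool) \<Rightarrow> (('r, 'm) rmod \<Rightarrow> bool) \<Rightarrow> ('r, 'm) rmod \<Rightarrow> bool" where
  "Filt G X M \<longleftrightarrow> G M \<and>
     (\<exists>k Ms. Ms 0 = {mzero M} \<and> Ms k = mcarrier M \<and>
        (\<forall>i\<le>k. strict_subobject G M (Ms i)) \<and>
        (\<forall>i<k. Ms i \<subseteq> Ms (Suc i)) \<and>
        (\<forall>i<k. \<exists>Y S. X Y \<and> strict_subobject G Y S \<and>
                 miso (quot (sub M (Ms (Suc i))) (Ms i)) (quot Y S)))"

end

theory Submission
  imports Defs
begin

text \<open>
  Filt(X) is closed under strict extensions because filtrations can be spliced: the image in B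
  of a filtration of A is followed by the preimages in B of a filtration of C. It is closed under
  strict quotients because a quotient map \<pi> : A \<rightarrow> A/S with S strict carries a filtration
  (M_i) of A to one of A/S: images of strict subobjects stay strict, and the factor
  \<pi>(M_(i+1))/\<pi>(M_i) is the quotient of M_(i+1)/M_i by the image of the strict subobject
  S \<inter> M_(i+1), while a strict quotient of a strict quotient of Y is a strict quotient of Y.
  Minimality is an induction along the filtration, each step being a strict extension by a
  member of P.
\<close>

section \<open>Arithmetic in a right module\<close>

lemma mzero_closed: "rmodule M \<Longrightarrow> mzero M \<in> mcarrier M"
  by (simp add: rmodule_def)

lemma madd_closed: "rmodule M \<Longrightarrow> x \<in> mcarrier M \<Longrightarrow> y \<in> mcarrier M \<Longrightarrow> madd M x y \<in> mcarrier M"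
  by (simp add: rmodule_def)

lemma msmult_closed: "rmodule M \<Longrightarrow> x \<in> mcarrier M \<Longrightarrow> msmult M x r \<in> mcarrier M"
  by (simp add: rmodule_def)

lemma madd_assoc:
  "rmodule M \<Longrightarrow> x \<in> mcarrier M \<Longrightarrow> y \<in> mcarrier M \<Longrightarrow> z \<in> mcarrier M \<Longrightarrow>
   madd M (madd M x y) z = madd M x (madd M y z)"
  unfolding rmodule_def by blast

lemma madd_comm: "rmodule M \<Longrightarrow> x \<in> mcarrier M \<Longrightarrow> y \<in> mcarrier M \<Longrightarrow> madd M x y = madd M y x"
  unfolding rmodule_def by blast

lemma madd_mzero_left: "rmodule M \<Longrightarrow> x \<in> mcarrier M \<Longrightarrow> madd M (mzero M) x = x"
  unfolding rmodule_def by blast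

lemma madd_mzero_right: "rmodule M \<Longrightarrow> x \<in> mcarrier M \<Longrightarrow> madd M x (mzero M) = x"
  by (metis madd_comm madd_mzero_left mzero_closed)

lemma madd_inverse_ex: "rmodule M \<Longrightarrow> x \<in> mcarrier M \<Longrightarrow> \<exists>y\<in>mcarrier M. madd M x y = mzero M"
  unfolding rmodule_def by (elim conjE) (rule bspec)

lemma msmult_madd_distrib:
  "rmodule M \<Longrightarrow> x \<in> mcarrier M \<Longrightarrow> y \<in> mcarrier M \<Longrightarrow>
   msmult M (madd M x y) r = madd M (msmult M x r) (msmult M y r)"
  unfolding rmodule_def by blast

lemma msmult_add_distrib:
  "rmodule M \<Longrightarrow> x \<in> mcarrier M \<Longrightarrow> msmult M x (r + s) = madd M (msmult M x r) (msmult M x s)"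
  unfolding rmodule_def by blast

lemma msmult_mult: "rmodule M \<Longrightarrow> x \<in> mcarrier M \<Longrightarrow> msmult M x (r * s) = msmult M (msmult M x r) s"
  unfolding rmodule_def by blast

lemma msmult_one: "rmodule M \<Longrightarrow> x \<in> mcarrier M \<Longrightarrow> msmult M x 1 = x"
  by (simp add: rmodule_def)

lemma madd_left_cancel:
  assumes M: "rmodule M" and x: "x \<in> mcarrier M" and a: "a \<in> mcarrier M" and b: "b \<in> mcarrier M"
    and eq: "madd M x a = madd M x b"
  shows "a = b"
proof -
  obtain y where y: "y \<in> mcarrier M" "madd M x y = mzero M" using madd_inverse_ex[OF M x] by blast
  have yx: "madd M y x = mzero M" using y M x madd_comm by metis
  have "a = madd M (madd M y x) a" using yx madd_mzero_left[OF M a] by simp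
  also have "\<dots> = madd M (madd M y x) b" using eq M x y a b by (simp add: madd_assoc)
  also have "\<dots> = b" using yx madd_mzero_left[OF M b] by simp
  finally show ?thesis .
qed

lemma madd_idem_imp_mzero: "rmodule M \<Longrightarrow> x \<in> mcarrier M \<Longrightarrow> madd M x x = x \<Longrightarrow> x = mzero M"
  by (metis madd_left_cancel madd_mzero_right mzero_closed)

lemma msmult_zero: "rmodule M \<Longrightarrow> x \<in> mcarrier M \<Longrightarrow> msmult M x 0 = mzero M"
  by (metis add_0 msmult_add_distrib madd_idem_imp_mzero msmult_closed)

lemma mzero_msmult: "rmodule M \<Longrightarrow> msmult M (mzero M) r = mzero M"
  by (metis msmult_madd_distrib madd_idem_imp_mzero msmult_closed mzero_closed madd_mzero_left)

definition mneg :: "('r::ring_1, 'm) rmod \<Rightarrow> 'm \<Rightarrow> 'm" where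
  "mneg M x = msmult M x (-1)"

definition msub :: "('r::ring_1, 'm) rmod \<Rightarrow> 'm \<Rightarrow> 'm \<Rightarrow> 'm" where
  "msub M x y = madd M x (mneg M y)"

lemma mneg_closed: "rmodule M \<Longrightarrow> x \<in> mcarrier M \<Longrightarrow> mneg M x \<in> mcarrier M"
  by (simp add: mneg_def msmult_closed)

lemma msub_closed: "rmodule M \<Longrightarrow> x \<in> mcarrier M \<Longrightarrow> y \<in> mcarrier M \<Longrightarrow> msub M x y \<in> mcarrier M"
  by (simp add: msub_def madd_closed mneg_closed)

lemma madd_mneg: "rmodule M \<Longrightarrow> x \<in> mcarrier M \<Longrightarrow> madd M x (mneg M x) = mzero M"
  by (metis mneg_def msmult_one msmult_add_distrib msmult_zero add.right_inverse)

lemma msub_self: "rmodule M \<Longrightarrow> x \<in> mcarrier M \<Longrightarrow> msub M x x = mzero M"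
  by (simp add: msub_def madd_mneg)

lemma msub_mzero: "rmodule M \<Longrightarrow> x \<in> mcarrier M \<Longrightarrow> msub M x (mzero M) = x"
  by (simp add: msub_def mneg_def mzero_msmult madd_mzero_right)

lemma madd_msub_cancel:
  assumes M: "rmodule M" and x: "x \<in> mcarrier M" and y: "y \<in> mcarrier M"
  shows "madd M y (msub M x y) = x"
proof -
  have "madd M y (msub M x y) = madd M x (madd M y (mneg M y))"
    unfolding msub_def by (metis M x y mneg_closed madd_assoc madd_comm)
  then show ?thesis using M x y by (simp add: madd_mneg madd_mzero_right)
qed

lemma msub_madd_cancel:
  assumes M: "rmodule M" and x: "x \<in> mcarrier M" and n: "n \<in> mcarrier M"
  shows "msub M (madd M x n) x = n"
proof -
  have "msub M (madd M x n) x = madd M n (madd M x (mneg M x))"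
    unfolding msub_def by (metis M x n mneg_closed madd_assoc madd_comm)
  then show ?thesis using M x n by (simp add: madd_mneg madd_mzero_right)
qed

lemma msub_eq_mzero_iff:
  "rmodule M \<Longrightarrow> x \<in> mcarrier M \<Longrightarrow> y \<in> mcarrier M \<Longrightarrow> msub M x y = mzero M \<longleftrightarrow> x = y"
  by (metis madd_msub_cancel madd_mzero_right msub_self)

lemma madd_madd_swap:
  assumes M: "rmodule M" and "a \<in> mcarrier M" "b \<in> mcarrier M" "c \<in> mcarrier M" "d \<in> mcarrier M"
  shows "madd M (madd M a b) (madd M c d) = madd M (madd M a c) (madd M b d)"
  using assms by (metis madd_assoc madd_closed madd_comm)

lemma msub_split:
  assumes M: "rmodule M" and x: "x \<in> mcarrier M" and y: "y \<in> mcarrier M" and z: "z \<in> mcarrier M"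
  shows "msub M z y = madd M (msub M z x) (msub M x y)"
proof -
  have nx: "mneg M x \<in> mcarrier M" and ny: "mneg M y \<in> mcarrier M"
    using M x y by (simp_all add: mneg_closed)
  have "madd M (msub M z x) (msub M x y) = madd M (madd M z x) (madd M (mneg M x) (mneg M y))"
    unfolding msub_def by (rule madd_madd_swap[OF M z nx x ny])
  also have "\<dots> = madd M z (madd M (madd M x (mneg M x)) (mneg M y))"
    using M x z nx ny by (simp add: madd_assoc madd_closed)
  finally show ?thesis using M x ny by (simp add: madd_mneg madd_mzero_left msub_def)
qed

lemma mneg_unique:
  "rmodule M \<Longrightarrow> a \<in> mcarrier M \<Longrightarrow> b \<in> mcarrier M \<Longrightarrow> madd M a b = mzero M \<Longrightarrow> b = mneg M a"
  by (metis madd_left_cancel mneg_closed madd_mneg)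

lemma msmult_msub:
  assumes M: "rmodule M" and a: "a \<in> mcarrier M" and b: "b \<in> mcarrier M"
  shows "msub M (msmult M a r) (msmult M b r) = msmult M (msub M a b) r"
proof -
  have "mneg M (msmult M b r) = msmult M (mneg M b) r"
    unfolding mneg_def using msmult_mult[OF M b] by (metis mult_minus1 mult_minus1_right)
  then show ?thesis unfolding msub_def using msmult_madd_distrib[OF M a mneg_closed[OF M b]] by simp
qed

lemma sub_simps [simp]:
  "mcarrier (sub M N) = N" "madd (sub M N) = madd M" "mzero (sub M N) = mzero M"
  "msmult (sub M N) = msmult M" "sub (sub M A) B = sub M B" "sub M (mcarrier M) = M"
  by (simp_all add: sub_def)

lemma msub_sub [simp]: "msub (sub M N) = msub M"
  by (simp add: msub_def mneg_def fun_eq_iff)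

lemma submodule_subset: "submodule M N \<Longrightarrow> N \<subseteq> mcarrier M"
  by (simp add: submodule_def)

lemma submodule_mzero: "submodule M N \<Longrightarrow> mzero M \<in> N"
  by (simp add: submodule_def)

lemma submodule_madd: "submodule M N \<Longrightarrow> x \<in> N \<Longrightarrow> y \<in> N \<Longrightarrow> madd M x y \<in> N"
  by (simp add: submodule_def)

lemma submodule_msmult: "submodule M N \<Longrightarrow> x \<in> N \<Longrightarrow> msmult M x r \<in> N"
  by (simp add: submodule_def)

lemma submodule_mneg: "submodule M N \<Longrightarrow> x \<in> N \<Longrightarrow> mneg M x \<in> N"
  by (simp add: submodule_def mneg_def)

lemma submodule_msub: "submodule M N \<Longrightarrow> x \<in> N \<Longrightarrow> y \<in> N \<Longrightarrow> msub M x y \<in> N"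
  by (simp add: msub_def submodule_madd submodule_mneg)

lemma submodule_msub_swap:
  assumes M: "rmodule M" and N: "submodule M N" and x: "x \<in> mcarrier M" and y: "y \<in> mcarrier M"
    and xy: "msub M x y \<in> N"
  shows "msub M y x \<in> N"
proof -
  have "madd M (msub M x y) (msub M y x) = mzero M"
    using msub_split[OF M y x x] msub_self[OF M x] by simp
  then have "msub M y x = mneg M (msub M x y)" using mneg_unique M msub_closed x y by metis
  then show ?thesis using submodule_mneg[OF N xy] by simp
qed

lemma submodule_carrier: "rmodule M \<Longrightarrow> submodule M (mcarrier M)"
  by (simp add: submodule_def mzero_closed madd_closed msmult_closed)

lemma submodule_trivial: "rmodule M \<Longrightarrow> submodule M {mzero M}"
  by (simp add: submodule_def mzero_closed mzero_msmult madd_mzero_left)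

lemma submodule_Int: "submodule M A \<Longrightarrow> submodule M B \<Longrightarrow> submodule M (A \<inter> B)"
  by (auto simp add: submodule_def)

lemma submodule_sub_iff: "W \<subseteq> mcarrier M \<Longrightarrow> submodule (sub M W) N \<longleftrightarrow> N \<subseteq> W \<and> submodule M N"
  by (auto simp add: submodule_def)

lemma rmodule_sub:
  assumes M: "rmodule M" and N: "submodule M N"
  shows "rmodule (sub M N)"
proof -
  have C: "x \<in> N \<Longrightarrow> x \<in> mcarrier M" for x using N by (auto simp add: submodule_def)
  show ?thesis
    unfolding rmodule_def sub_simps
  proof (intro conjI ballI allI)
    fix x y z assume "x \<in> N" "y \<in> N" "z \<in> N"
    then show "madd M (madd M x y) z = madd M x (madd M y z)" using madd_assoc[OF M] C by blast
  qed (use M N C submodule_mneg[OF N] madd_mneg[OF M] in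
      \<open>auto simp add: submodule_mzero submodule_madd submodule_msmult madd_comm madd_mzero_left
        madd_mzero_right msmult_madd_distrib msmult_add_distrib msmult_mult msmult_one\<close>)
qed

lemma mhom_closed: "mhom A B f \<Longrightarrow> x \<in> mcarrier A \<Longrightarrow> f x \<in> mcarrier B"
  by (simp add: mhom_def)

lemma mhom_madd:
  "mhom A B f \<Longrightarrow> x \<in> mcarrier A \<Longrightarrow> y \<in> mcarrier A \<Longrightarrow> f (madd A x y) = madd B (f x) (f y)"
  by (simp add: mhom_def)

lemma mhom_msmult: "mhom A B f \<Longrightarrow> x \<in> mcarrier A \<Longrightarrow> f (msmult A x r) = msmult B (f x) r"
  by (simp add: mhom_def)

lemma mhom_mzero:
  assumes A: "rmodule A" and B: "rmodule B" and f: "mhom A B f"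
  shows "f (mzero A) = mzero B"
proof -
  have "f (mzero A) = madd B (f (mzero A)) (f (mzero A))"
    by (metis A f madd_mzero_left mhom_madd mzero_closed)
  then show ?thesis by (metis A B f madd_idem_imp_mzero mhom_closed mzero_closed)
qed

lemma mhom_msub:
  "rmodule A \<Longrightarrow> mhom A B f \<Longrightarrow> x \<in> mcarrier A \<Longrightarrow> y \<in> mcarrier A \<Longrightarrow>
   f (msub A x y) = msub B (f x) (f y)"
  by (simp add: msub_def mneg_def mhom_madd mhom_msmult msmult_closed)

lemma mhom_eq_iff:
  "rmodule A \<Longrightarrow> rmodule B \<Longrightarrow> mhom A B f \<Longrightarrow> x \<in> mcarrier A \<Longrightarrow> y \<in> mcarrier A \<Longrightarrow>
   f x = f y \<longleftrightarrow> f (msub A x y) = mzero B"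
  by (simp add: mhom_msub msub_eq_mzero_iff mhom_closed)

lemma mhom_comp: "mhom A B f \<Longrightarrow> mhom B C g \<Longrightarrow> mhom A C (\<lambda>x. g (f x))"
  by (simp add: mhom_def)

lemma mhom_restrict: "mhom A B f \<Longrightarrow> N \<subseteq> mcarrier A \<Longrightarrow> f ` N \<subseteq> W \<Longrightarrow> mhom (sub A N) (sub B W) f"
  by (auto simp add: mhom_def subset_iff)

lemma mhom_restrict_dom: "mhom A B f \<Longrightarrow> N \<subseteq> mcarrier A \<Longrightarrow> mhom (sub A N) B f"
  by (auto simp add: mhom_def subset_iff)

lemma mhom_id: "rmodule B \<Longrightarrow> mhom B B (\<lambda>x. x)"
  by (auto simp add: mhom_def rmodule_def)

lemma mhom_inv_into:
  assumes f: "mhom A B f" and bij: "bij_betw f (mcarrier A) (mcarrier B)" and A: "rmodule A"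
  shows "mhom B A (inv_into (mcarrier A) f)"
  unfolding mhom_def
proof (intro conjI ballI allI)
  let ?g = "inv_into (mcarrier A) f"
  have g: "y \<in> mcarrier B \<Longrightarrow> ?g y \<in> mcarrier A \<and> f (?g y) = y" for y
    using bij by (metis bij_betw_imp_surj_on bij_betw_inv_into_right inv_into_into)
  have gf: "x \<in> mcarrier A \<Longrightarrow> ?g (f x) = x" for x
    using bij by (meson bij_betw_inv_into_left)
  fix x y r assume x: "x \<in> mcarrier B"
  show "?g x \<in> mcarrier A" using g x by blast
  show "?g (msmult B x r) = msmult A (?g x) r"
    using mhom_msmult[OF f] g gf x msmult_closed[OF A] by metis
  assume y: "y \<in> mcarrier B"
  show "?g (madd B x y) = madd A (?g x) (?g y)"
    using mhom_madd[OF f] g gf x y madd_closed[OF A] by metis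
qed

lemma submodule_image:
  assumes A: "rmodule A" and B: "rmodule B" and f: "mhom A B f" and N: "submodule A N"
  shows "submodule B (f ` N)"
  unfolding submodule_def
proof (intro conjI ballI allI)
  have C: "x \<in> N \<Longrightarrow> x \<in> mcarrier A" for x using N by (auto simp add: submodule_def)
  show "f ` N \<subseteq> mcarrier B" using C mhom_closed[OF f] by blast
  show "mzero B \<in> f ` N" using mhom_mzero[OF A B f] submodule_mzero[OF N] by force
  fix x y r assume "x \<in> f ` N" "y \<in> f ` N"
  then obtain a b where "a \<in> N" "b \<in> N" "x = f a" "y = f b" by blast
  then show "madd B x y \<in> f ` N" "msmult B x r \<in> f ` N"
    using C mhom_madd[OF f] mhom_msmult[OF f] submodule_madd[OF N] submodule_msmult[OF N]
    by (metis image_eqI)+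
qed

lemma submodule_preimage:
  assumes A: "rmodule A" and B: "rmodule B" and f: "mhom A B f" and K: "submodule B K"
  shows "submodule A {x \<in> mcarrier A. f x \<in> K}"
  using assms unfolding submodule_def
  by (auto simp: mzero_closed madd_closed msmult_closed mhom_mzero[OF A B f] mhom_madd mhom_msmult)

lemma miso_refl: "rmodule M \<Longrightarrow> miso M M"
  unfolding miso_def by (rule exI[of _ "\<lambda>x. x"]) (simp add: mhom_id bij_betw_id[unfolded id_def])

lemma miso_sym: "rmodule A \<Longrightarrow> miso A B \<Longrightarrow> miso B A"
  unfolding miso_def by (meson bij_betw_inv_into mhom_inv_into)

lemma miso_trans: "miso A B \<Longrightarrow> miso B C \<Longrightarrow> miso A C"
  unfolding miso_def using mhom_comp bij_betw_trans[unfolded comp_def] by blast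

section \<open>Quotient modules\<close>

lemma quot_carrier_zero [simp]: "mcarrier (quot M N) = coset M N ` mcarrier M"
  "mzero (quot M N) = N"
  by (simp_all add: quot_def)

context
  fixes M :: "('r::ring_1, 'm) rmod" and N
  assumes M: "rmodule M" and N: "submodule M N"
begin

lemma coset_mem_iff:
  assumes x: "x \<in> mcarrier M"
  shows "z \<in> coset M N x \<longleftrightarrow> z \<in> mcarrier M \<and> msub M z x \<in> N"
proof
  assume "z \<in> coset M N x"
  then obtain n where "n \<in> N" "z = madd M x n" unfolding coset_def by blast
  then show "z \<in> mcarrier M \<and> msub M z x \<in> N"
    using submodule_subset[OF N] madd_closed[OF M x] msub_madd_cancel[OF M x] by auto
next
  assume "z \<in> mcarrier M \<and> msub M z x \<in> N"
  then show "z \<in> coset M N x" unfolding coset_def using madd_msub_cancel[OF M _ x] by force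
qed

lemma coset_self: "x \<in> mcarrier M \<Longrightarrow> x \<in> coset M N x"
  using coset_mem_iff msub_self[OF M] submodule_mzero[OF N] by simp

lemma coset_eq_iff:
  assumes x: "x \<in> mcarrier M" and y: "y \<in> mcarrier M"
  shows "coset M N x = coset M N y \<longleftrightarrow> msub M x y \<in> N"
proof
  assume "coset M N x = coset M N y"
  then show "msub M x y \<in> N" using coset_self[OF x] coset_mem_iff[OF y] by blast
next
  assume xy: "msub M x y \<in> N"
  have yx: "msub M y x \<in> N" using submodule_msub_swap[OF M N x y xy] .
  show "coset M N x = coset M N y"
    using coset_mem_iff[OF x] coset_mem_iff[OF y] msub_split[OF M x y] msub_split[OF M y x]
      submodule_madd[OF N] xy yx by (intro set_eqI) metis
qed

lemma coset_mzero: "coset M N (mzero M) = N"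
  unfolding coset_def using madd_mzero_left[OF M] submodule_subset[OF N] by auto (metis subsetD)

lemma coset_eq_N_iff: "x \<in> mcarrier M \<Longrightarrow> coset M N x = N \<longleftrightarrow> x \<in> N"
  using coset_eq_iff[OF _ mzero_closed[OF M], of x] coset_mzero msub_mzero[OF M] by simp

lemma quot_madd:
  assumes x: "x \<in> mcarrier M" and y: "y \<in> mcarrier M"
  shows "madd (quot M N) (coset M N x) (coset M N y) = coset M N (madd M x y)"
proof -
  have NC: "n \<in> mcarrier M" if "n \<in> N" for n using submodule_subset[OF N] that by blast
  show ?thesis
    unfolding quot_def
  proof (simp, intro set_eqI iffI)
    fix z assume "z \<in> {madd M a b |a b. a \<in> coset M N x \<and> b \<in> coset M N y}"
    then obtain n m where nm: "n \<in> N" "m \<in> N" "z = madd M (madd M x n) (madd M y m)"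
      unfolding coset_def by blast
    then have "z = madd M (madd M x y) (madd M n m)" using madd_madd_swap[OF M x NC y NC] by simp
    then show "z \<in> coset M N (madd M x y)" unfolding coset_def
      using submodule_madd[OF N nm(1,2)] by blast
  next
    fix z assume "z \<in> coset M N (madd M x y)"
    then obtain n where n: "n \<in> N" "z = madd M (madd M x y) n" unfolding coset_def by blast
    then have "z = madd M (madd M x n) (madd M y (mzero M))"
      using madd_madd_swap[OF M x NC y mzero_closed[OF M]] madd_mzero_right[OF M NC] by simp
    then show "z \<in> {madd M a b |a b. a \<in> coset M N x \<and> b \<in> coset M N y}"
      unfolding coset_def using n(1) submodule_mzero[OF N] by blast
  qed
qed

lemma quot_msmult: "x \<in> mcarrier M \<Longrightarrow> msmult (quot M N) (coset M N x) r = coset M N (msmult M x r)"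
proof -
  assume x: "x \<in> mcarrier M"
  define z where "z = (SOME z. z \<in> coset M N x)"
  have "z \<in> coset M N x" unfolding z_def using coset_self[OF x] by (rule someI)
  then have z: "z \<in> mcarrier M" "msub M z x \<in> N" using coset_mem_iff[OF x] by auto
  have "msub M (msmult M z r) (msmult M x r) \<in> N"
    using msmult_msub[OF M z(1) x] submodule_msmult[OF N z(2)] by simp
  then show ?thesis
    using coset_eq_iff msmult_closed[OF M] z x by (simp add: z_def[symmetric] quot_def)
qed

lemma rmodule_quot: "rmodule (quot M N)"
proof -
  have rep: "X \<in> mcarrier (quot M N) \<Longrightarrow> \<exists>x\<in>mcarrier M. X = coset M N x" for X by auto
  show ?thesis
    unfolding rmodule_def
  proof (intro conjI ballI allI)
    show "mzero (quot M N) \<in> mcarrier (quot M N)" using coset_mzero mzero_closed[OF M] by force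
    fix X Y Z r s assume "X \<in> mcarrier (quot M N)"
    then obtain x where x: "x \<in> mcarrier M" "X = coset M N x" by auto
    show "msmult (quot M N) X r \<in> mcarrier (quot M N)"
      using x quot_msmult msmult_closed[OF M] by simp
    show "\<exists>Y\<in>mcarrier (quot M N). madd (quot M N) X Y = mzero (quot M N)"
      using x quot_madd mneg_closed[OF M x(1)] madd_mneg[OF M x(1)] coset_mzero by force
    show "msmult (quot M N) X (r + s) =
          madd (quot M N) (msmult (quot M N) X r) (msmult (quot M N) X s)"
      using x quot_msmult quot_madd msmult_closed[OF M] msmult_add_distrib[OF M] by simp
    show "msmult (quot M N) X (r * s) = msmult (quot M N) (msmult (quot M N) X r) s"
      using x quot_msmult msmult_closed[OF M] msmult_mult[OF M] by simp
    show "msmult (quot M N) X 1 = X" using x quot_msmult msmult_one[OF M] by simp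
    show "madd (quot M N) (mzero (quot M N)) X = X"
      using x quot_madd[OF mzero_closed[OF M] x(1)] coset_mzero madd_mzero_left[OF M x(1)] by simp
    assume "Y \<in> mcarrier (quot M N)"
    then obtain y where y: "y \<in> mcarrier M" "Y = coset M N y" by auto
    show "madd (quot M N) X Y \<in> mcarrier (quot M N)" using x y quot_madd madd_closed[OF M] by simp
    show "madd (quot M N) X Y = madd (quot M N) Y X" using x y quot_madd madd_comm[OF M] by metis
    show "msmult (quot M N) (madd (quot M N) X Y) r =
          madd (quot M N) (msmult (quot M N) X r) (msmult (quot M N) Y r)"
      using x y quot_madd quot_msmult madd_closed[OF M] msmult_closed[OF M]
        msmult_madd_distrib[OF M]
      by simp
    assume "Z \<in> mcarrier (quot M N)"
    then obtain z where z: "z \<in> mcarrier M" "Z = coset M N z" by auto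
    show "madd (quot M N) (madd (quot M N) X Y) Z = madd (quot M N) X (madd (quot M N) Y Z)"
      using x y z quot_madd madd_closed[OF M] madd_assoc[OF M] by simp
  qed
qed

lemma mhom_coset: "mhom M (quot M N) (coset M N)"
  unfolding mhom_def using quot_madd quot_msmult by simp

end

definition quotient_map :: "('r, 'a) rmod \<Rightarrow> ('r, 'b) rmod \<Rightarrow> ('a \<Rightarrow> 'b) \<Rightarrow> 'a set \<Rightarrow> bool" where
  "quotient_map M Q p K \<longleftrightarrow>
     mhom M Q p \<and> p ` mcarrier M = mcarrier Q \<and> {x \<in> mcarrier M. p x = mzero Q} = K"

lemma quotient_map_coset:
  assumes M: "rmodule M" and N: "submodule M N"
  shows "quotient_map M (quot M N) (coset M N) N"
  unfolding quotient_map_def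
  using mhom_coset[OF M N] coset_eq_N_iff[OF M N] submodule_subset[OF N] by auto

lemma quotient_map_comp:
  "quotient_map M Q p K \<Longrightarrow> quotient_map Q R q L \<Longrightarrow>
   quotient_map M R (\<lambda>x. q (p x)) {x \<in> mcarrier M. p x \<in> L}"
  unfolding quotient_map_def using mhom_comp mhom_closed by (fastforce simp: image_image[symmetric])

lemma quotient_map_bij:
  assumes f: "mhom A B f" and bij: "bij_betw f (mcarrier A) (mcarrier B)"
    and A: "rmodule A" and B: "rmodule B"
  shows "quotient_map A B f {mzero A}"
proof -
  have "x = mzero A" if "x \<in> mcarrier A" "f x = mzero B" for x
    using that mhom_mzero[OF A B f] bij mzero_closed[OF A]
    unfolding bij_betw_def inj_on_def by metis
  then have "{x \<in> mcarrier A. f x = mzero B} = {mzero A}"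
    using mhom_mzero[OF A B f] mzero_closed[OF A] by blast
  then show ?thesis unfolding quotient_map_def using f bij bij_betw_imp_surj_on by blast
qed

lemma quotient_map_kernel_submodule:
  assumes p: "quotient_map M Q p K" and M: "rmodule M" and Q: "rmodule Q"
  shows "submodule M K"
proof -
  have "K = {x \<in> mcarrier M. p x \<in> {mzero Q}}" using p unfolding quotient_map_def by auto
  moreover have "mhom M Q p" using p unfolding quotient_map_def by blast
  ultimately show ?thesis using submodule_preimage[OF M Q _ submodule_trivial[OF Q]] by simp
qed

lemma quotient_map_eq_iff:
  assumes p: "quotient_map M Q p K" and M: "rmodule M" and Q: "rmodule Q"
    and x: "x \<in> mcarrier M" and y: "y \<in> mcarrier M"
  shows "p x = p y \<longleftrightarrow> msub M x y \<in> K"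
proof -
  have hom: "mhom M Q p" and ker: "{x \<in> mcarrier M. p x = mzero Q} = K"
    using p unfolding quotient_map_def by auto
  have "p x = p y \<longleftrightarrow> p (msub M x y) = mzero Q" by (rule mhom_eq_iff[OF M Q hom x y])
  also have "\<dots> \<longleftrightarrow> msub M x y \<in> K" using ker msub_closed[OF M x y] by blast
  finally show ?thesis .
qed

lemma miso_quot_quotient_map:
  assumes B: "rmodule B" and C: "rmodule C" and p: "quotient_map B C p N"
  shows "miso (quot B N) C"
proof -
  have N: "submodule B N" using quotient_map_kernel_submodule[OF p B C] .
  have hom: "mhom B C p" and surj: "p ` mcarrier B = mcarrier C"
    using p unfolding quotient_map_def by auto
  define F where "F X = p (SOME x. x \<in> X)" for X
  have F: "F (coset B N x) = p x" if x: "x \<in> mcarrier B" for x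
  proof -
    have "(SOME z. z \<in> coset B N x) \<in> coset B N x" using coset_self[OF B N x] by (rule someI)
    then show ?thesis
      unfolding F_def using coset_mem_iff[OF B N x] quotient_map_eq_iff[OF p B C _ x] by blast
  qed
  have "mhom (quot B N) C F"
    unfolding mhom_def
    using F quot_madd[OF B N] quot_msmult[OF B N] hom madd_closed[OF B] msmult_closed[OF B]
    by (auto simp: mhom_closed mhom_madd mhom_msmult)
  moreover have "inj_on F (mcarrier (quot B N))"
  proof (rule inj_onI)
    fix X Y assume "X \<in> mcarrier (quot B N)" "Y \<in> mcarrier (quot B N)" "F X = F Y"
    then obtain x y where "x \<in> mcarrier B" "y \<in> mcarrier B" "X = coset B N x" "Y = coset B N y"
      "p x = p y"
      using F by auto
    then show "X = Y" using coset_eq_iff[OF B N] quotient_map_eq_iff[OF p B C] by simp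
  qed
  moreover have "F ` mcarrier (quot B N) = mcarrier C" using F surj by (auto simp: image_image)
  ultimately show ?thesis unfolding miso_def bij_betw_def by blast
qed

lemma quotient_map_if_miso_quot:
  assumes C: "rmodule C" and B: "rmodule B" and N: "submodule B N" and iso: "miso C (quot B N)"
  shows "\<exists>g. quotient_map B C g N"
proof -
  obtain f where f: "mhom C (quot B N) f" "bij_betw f (mcarrier C) (mcarrier (quot B N))"
    using iso unfolding miso_def by blast
  have "quotient_map (quot B N) C (inv_into (mcarrier C) f) {N}"
    using quotient_map_bij[OF mhom_inv_into[OF f C] bij_betw_inv_into[OF f(2)]
        rmodule_quot[OF B N] C]
    by simp
  moreover have "{x \<in> mcarrier B. coset B N x \<in> {N}} = N"
    using coset_eq_N_iff[OF B N] submodule_subset[OF N] by auto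
  ultimately show ?thesis using quotient_map_comp[OF quotient_map_coset[OF B N]] by fastforce
qed

lemma miso_quot_preimage:
  assumes M: "rmodule M" and Q: "rmodule Q" and p: "quotient_map M Q p K" and V: "submodule Q V"
  shows "miso (quot M {x \<in> mcarrier M. p x \<in> V}) (quot Q V)"
  using miso_quot_quotient_map[OF M rmodule_quot[OF Q V]
      quotient_map_comp[OF p quotient_map_coset[OF Q V]]] .

lemma quotient_map_factor:
  assumes M: "rmodule M" and Q: "rmodule Q" and F: "rmodule F"
    and p: "quotient_map M Q p K" and u: "quotient_map M F u L" and KL: "K \<subseteq> L"
  shows "\<exists>t. quotient_map Q F t (p ` L)"
proof -
  define t where "t q = u (SOME m. m \<in> mcarrier M \<and> p m = q)" for q
  have hp: "mhom M Q p" "p ` mcarrier M = mcarrier Q" using p unfolding quotient_map_def by auto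
  have hu: "mhom M F u" "u ` mcarrier M = mcarrier F" "L = {x \<in> mcarrier M. u x = mzero F}"
    using u unfolding quotient_map_def by auto
  have tp: "t (p x) = u x" if x: "x \<in> mcarrier M" for x
  proof -
    let ?m = "SOME m. m \<in> mcarrier M \<and> p m = p x"
    have m: "?m \<in> mcarrier M \<and> p ?m = p x" using x by (metis (mono_tags, lifting) someI)
    then have "msub M ?m x \<in> K" using quotient_map_eq_iff[OF p M Q] x by blast
    then show ?thesis unfolding t_def using quotient_map_eq_iff[OF u M F] x m KL by blast
  qed
  have "mhom Q F t"
    unfolding mhom_def
  proof (intro conjI ballI allI)
    fix a b r assume "a \<in> mcarrier Q"
    then obtain x where x: "x \<in> mcarrier M" "a = p x" using hp(2) by blast
    show "t a \<in> mcarrier F" using x tp mhom_closed[OF hu(1)] by simp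
    show "t (msmult Q a r) = msmult F (t a) r"
      using x tp mhom_msmult[OF hp(1)] mhom_msmult[OF hu(1)] msmult_closed[OF M] by metis
    assume "b \<in> mcarrier Q"
    then obtain y where y: "y \<in> mcarrier M" "b = p y" using hp(2) by blast
    show "t (madd Q a b) = madd F (t a) (t b)"
      using x y tp mhom_madd[OF hp(1)] mhom_madd[OF hu(1)] madd_closed[OF M] by metis
  qed
  moreover have "t ` mcarrier Q = mcarrier F"
  proof -
    have "t ` mcarrier Q = t ` p ` mcarrier M" using hp(2) by simp
    also have "\<dots> = u ` mcarrier M" using tp by (simp add: image_image)
    finally show ?thesis using hu(2) by simp
  qed
  moreover have "{q \<in> mcarrier Q. t q = mzero F} = p ` L"
    using hp(2) hu(3) tp by force
  ultimately show ?thesis unfolding quotient_map_def by blast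
qed

lemma image_kernel_sum_eq:
  assumes A: "rmodule A" and C: "rmodule C" and \<pi>: "quotient_map A C \<pi> S"
    and M1: "submodule A M1" and M0: "submodule A M0" and M0M1: "M0 \<subseteq> M1"
    and Q: "rmodule Q" and p: "mhom (sub A M1) Q p" and p0: "\<forall>x\<in>M0. p x = mzero Q"
  shows "p ` {x \<in> M1. \<pi> x \<in> \<pi> ` M0} = p ` (S \<inter> M1)"
proof (intro set_eqI iffI)
  fix q assume "q \<in> p ` {x \<in> M1. \<pi> x \<in> \<pi> ` M0}"
  then obtain n m where n: "n \<in> M1" "q = p n" and m: "m \<in> M0" "\<pi> n = \<pi> m" by blast
  have nA: "n \<in> mcarrier A" and mA: "m \<in> mcarrier A" and m1: "m \<in> M1"
    using n m M0M1 submodule_subset[OF M1] by auto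
  have "msub A n m \<in> S" using quotient_map_eq_iff[OF \<pi> A C nA mA] m(2) by simp
  moreover have "msub A n m \<in> M1" using submodule_msub[OF M1 n(1) m1] .
  moreover have "p (msub A n m) = q"
    using mhom_msub[OF rmodule_sub[OF A M1] p] n m1 p0 m(1) msub_mzero[OF Q mhom_closed[OF p]]
    by simp
  ultimately show "q \<in> p ` (S \<inter> M1)" by blast
next
  fix q assume "q \<in> p ` (S \<inter> M1)"
  then obtain s where s: "s \<in> S" "s \<in> M1" "q = p s" by blast
  have "\<pi> s = \<pi> (mzero A)"
    using s(1) \<pi> mhom_mzero[OF A C] unfolding quotient_map_def by auto
  then show "q \<in> p ` {x \<in> M1. \<pi> x \<in> \<pi> ` M0}" using s submodule_mzero[OF M0] by blast
qed

lemma submodule_image_sub: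
  assumes A: "rmodule A" and C: "rmodule C" and hom: "mhom A C \<pi>"
    and M1: "submodule A M1" and M0: "submodule A M0" and M0M1: "M0 \<subseteq> M1"
  shows "submodule (sub C (\<pi> ` M1)) (\<pi> ` M0)"
  using submodule_sub_iff[OF submodule_subset[OF submodule_image[OF A C hom M1]]]
    submodule_image[OF A C hom M0] M0M1 by blast

lemma quotient_map_onto_image_quot:
  assumes A: "rmodule A" and C: "rmodule C" and \<pi>: "quotient_map A C \<pi> S"
    and M1: "submodule A M1" and M0: "submodule A M0" and M0M1: "M0 \<subseteq> M1"
    and Q: "rmodule Q" and p: "quotient_map (sub A M1) Q p M0"
  shows "\<exists>t. quotient_map Q (quot (sub C (\<pi> ` M1)) (\<pi> ` M0)) t (p ` (S \<inter> M1))"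
proof -
  have hom: "mhom A C \<pi>" using \<pi> unfolding quotient_map_def by blast
  have M1C: "M1 \<subseteq> mcarrier A" using submodule_subset[OF M1] .
  have img1: "submodule C (\<pi> ` M1)" using submodule_image[OF A C hom M1] .
  have img0: "submodule (sub C (\<pi> ` M1)) (\<pi> ` M0)"
    using submodule_image_sub[OF A C hom M1 M0 M0M1] .
  have C1: "rmodule (sub C (\<pi> ` M1))" using rmodule_sub[OF C img1] .
  have "quotient_map (sub A M1) (sub C (\<pi> ` M1)) \<pi> {x \<in> M1. \<pi> x = mzero C}"
    unfolding quotient_map_def using mhom_restrict[OF hom M1C] by simp
  from quotient_map_comp[OF this quotient_map_coset[OF C1 img0]]
  have "quotient_map (sub A M1) (quot (sub C (\<pi> ` M1)) (\<pi> ` M0))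
          (\<lambda>x. coset (sub C (\<pi> ` M1)) (\<pi> ` M0) (\<pi> x)) {x \<in> M1. \<pi> x \<in> \<pi> ` M0}"
    by simp
  from quotient_map_factor[OF rmodule_sub[OF A M1] Q rmodule_quot[OF C1 img0] p this]
  obtain t where "quotient_map Q (quot (sub C (\<pi> ` M1)) (\<pi> ` M0)) t (p ` {x \<in> M1. \<pi> x \<in> \<pi> ` M0})"
    using M0M1 by blast
  moreover have "p ` {x \<in> M1. \<pi> x \<in> \<pi> ` M0} = p ` (S \<inter> M1)"
  proof (rule image_kernel_sum_eq[OF A C \<pi> M1 M0 M0M1 Q])
    show "mhom (sub A M1) Q p" "\<forall>x\<in>M0. p x = mzero Q" using p unfolding quotient_map_def by auto
  qed
  ultimately show ?thesis by auto
qed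

lemma trivial_if_miso_quot_self:
  assumes Z: "rmodule Z" and B: "rmodule B" and iso: "miso Z (quot B (mcarrier B))"
  shows "mcarrier Z = {mzero Z}"
proof -
  have "mcarrier (quot B (mcarrier B)) = {mcarrier B}"
    using coset_eq_N_iff[OF B submodule_carrier[OF B]] mzero_closed[OF B] by auto
  moreover obtain f where "bij_betw f (mcarrier Z) (mcarrier (quot B (mcarrier B)))"
    using iso unfolding miso_def by blast
  ultimately have "x = mzero Z" if "x \<in> mcarrier Z" for x
    using that mzero_closed[OF Z] unfolding bij_betw_def inj_on_def by (metis image_eqI singletonD)
  then show ?thesis using mzero_closed[OF Z] by blast
qed

lemma miso_trivial:
  assumes Z: "rmodule Z" and "mcarrier Z = {mzero Z}" and M: "rmodule M"
  shows "miso Z (sub M {mzero M})"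
  unfolding miso_def
proof (intro exI conjI)
  show "mhom Z (sub M {mzero M}) (\<lambda>_. mzero M)"
    unfolding mhom_def using madd_mzero_left[OF M mzero_closed[OF M]] mzero_msmult[OF M] by simp
  show "bij_betw (\<lambda>_. mzero M) (mcarrier Z) (mcarrier (sub M {mzero M}))"
    using assms(2) by (simp add: bij_betw_def)
qed

section \<open>Strict subobjects\<close>

lemma strict_subobject_submodule: "strict_subobject G M T \<Longrightarrow> submodule M T"
  unfolding strict_subobject_def subobject_def by blast

lemma strict_subobject_G: "strict_subobject G M T \<Longrightarrow> G (sub M T)"
  unfolding strict_subobject_def subobject_def by blast

lemma strict_subobject_Int: "strict_subobject G M T \<Longrightarrow> subobject G M B \<Longrightarrow> G (sub M (T \<inter> B))"
  unfolding strict_subobject_def by blast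

lemma subobject_sub_iff: "submodule M W \<Longrightarrow> subobject G (sub M W) N \<longleftrightarrow> N \<subseteq> W \<and> subobject G M N"
  unfolding subobject_def using submodule_sub_iff[OF submodule_subset] by auto

lemma strict_subobject_trans:
  assumes TW: "strict_subobject G (sub B W) T" and W: "strict_subobject G B W"
  shows "strict_subobject G B T"
  unfolding strict_subobject_def
proof (intro conjI allI impI)
  have Wsm: "submodule B W" using strict_subobject_submodule[OF W] .
  have T: "T \<subseteq> W" "subobject G B T"
    using TW subobject_sub_iff[OF Wsm] unfolding strict_subobject_def by auto
  then show "subobject G B T" by blast
  fix B' assume B': "subobject G B B'"
  then have "subobject G (sub B W) (W \<inter> B')"
    using strict_subobject_Int[OF W B'] submodule_Int[OF Wsm] subobject_sub_iff[OF Wsm]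
    unfolding subobject_def by auto
  then have "G (sub B (T \<inter> (W \<inter> B')))" using strict_subobject_Int[OF TW] by simp
  moreover have "T \<inter> (W \<inter> B') = T \<inter> B'" using T(1) by blast
  ultimately show "G (sub B (T \<inter> B'))" by simp
qed

lemma strict_subobject_Int_restrict:
  assumes S: "strict_subobject G M S" and W: "subobject G M W"
  shows "strict_subobject G (sub M W) (S \<inter> W)"
proof -
  have Wsm: "submodule M W" using W unfolding subobject_def by blast
  have "subobject G M (S \<inter> W)"
    using strict_subobject_Int[OF S W] submodule_Int[OF strict_subobject_submodule[OF S] Wsm]
    unfolding subobject_def by blast
  moreover have "S \<inter> W \<inter> B = S \<inter> B" if "B \<subseteq> W" for B using that by blast
  ultimately show ?thesis
    unfolding strict_subobject_def subobject_sub_iff[OF Wsm]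
    using strict_subobject_Int[OF S] by auto
qed

lemma strict_subobject_restrict:
  "strict_subobject G M T \<Longrightarrow> subobject G M W \<Longrightarrow> T \<subseteq> W \<Longrightarrow> strict_subobject G (sub M W) T"
  using strict_subobject_Int_restrict by (metis Int_absorb2)

locale torsion_setting =
  fixes G :: "('r::ring_1, 'm) rmod \<Rightarrow> bool"
  assumes torsion: "torsion_class G"
begin

lemma G_rmodule: "G M \<Longrightarrow> rmodule M"
  using torsion unfolding torsion_class_def fg_module_def by blast

lemma G_miso: "G B \<Longrightarrow> miso B C \<Longrightarrow> G C"
  using torsion unfolding torsion_class_def by blast

lemma G_extension: "G A \<Longrightarrow> G C \<Longrightarrow> short_exact A B C f g \<Longrightarrow> G B"
  using torsion unfolding torsion_class_def by blast

lemma G_quot: "G B \<Longrightarrow> submodule B N \<Longrightarrow> in_class G (quot B N)"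
  using torsion unfolding torsion_class_def by blast

lemma G_nonempty: "\<exists>M. G M"
  using torsion unfolding torsion_class_def by blast

text \<open>A quotient module has carrier type 'm set, so it is not itself a candidate member of G;
  this replaces it by an isomorphic member of G together with the quotient map onto it.\<close>

lemma quotient_map_onto_G:
  assumes B: "G B" and N: "submodule B N"
  shows "\<exists>C p. G C \<and> quotient_map B C p N \<and> miso C (quot B N)"
proof -
  obtain C where C: "G C" "miso C (quot B N)" using G_quot[OF B N] unfolding in_class_def by blast
  then show ?thesis
    using quotient_map_if_miso_quot[OF G_rmodule[OF C(1)] G_rmodule[OF B] N] by blast
qed

lemma G_image:
  assumes M: "G M" and Q: "rmodule Q" and p: "mhom M Q p"
  shows "G (sub Q (p ` mcarrier M))"
proof -
  have Mr: "rmodule M" using G_rmodule[OF M] .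
  define K where "K = {x \<in> mcarrier M. p x = mzero Q}"
  have img: "submodule Q (p ` mcarrier M)"
    using submodule_image[OF Mr Q p submodule_carrier[OF Mr]] .
  have "quotient_map M (sub Q (p ` mcarrier M)) p K"
    unfolding quotient_map_def K_def using mhom_restrict[OF p order_refl order_refl] by simp
  then have "miso (quot M K) (sub Q (p ` mcarrier M))"
    using miso_quot_quotient_map[OF Mr rmodule_sub[OF Q img]] by blast
  moreover obtain C where "G C" "miso C (quot M K)"
    using G_quot[OF M] submodule_preimage[OF Mr Q p submodule_trivial[OF Q]]
    unfolding in_class_def K_def by auto
  ultimately show ?thesis using G_miso miso_trans by blast
qed

lemma G_image_sub:
  assumes "submodule A N" and "G (sub A N)" and "rmodule Q" and "mhom A Q p"
  shows "G (sub Q (p ` N))"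
  using G_image[OF assms(2,3) mhom_restrict_dom[OF assms(4) submodule_subset[OF assms(1)]]] by simp

lemma G_extension_kernel:
  assumes B: "rmodule B" and W: "submodule B W" and Q: "rmodule Q" and p: "mhom B Q p"
    and ker: "G (sub B {x \<in> W. p x = mzero Q})" and img: "G (sub Q (p ` W))"
  shows "G (sub B W)"
proof -
  define K where "K = {x \<in> W. p x = mzero Q}"
  have WC: "W \<subseteq> mcarrier B" using submodule_subset[OF W] .
  have "K = W \<inter> {x \<in> mcarrier B. p x \<in> {mzero Q}}" using WC unfolding K_def by auto
  then have K: "submodule B K"
    using submodule_Int[OF W submodule_preimage[OF B Q p submodule_trivial[OF Q]]] by simp
  have "short_exact (sub B K) (sub B W) (sub Q (p ` W)) (\<lambda>x. x) p"
    unfolding short_exact_def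
  proof (intro conjI)
    show "rmodule (sub B K)" "rmodule (sub B W)" "rmodule (sub Q (p ` W))"
      using rmodule_sub[OF B K] rmodule_sub[OF B W] rmodule_sub[OF Q submodule_image[OF B Q p W]] .
    show "mhom (sub B K) (sub B W) (\<lambda>x. x)" unfolding mhom_def K_def by auto
    show "mhom (sub B W) (sub Q (p ` W)) p" using mhom_restrict[OF p WC] by simp
    show "(\<lambda>x. x) ` mcarrier (sub B K) = mkernel (sub B W) (sub Q (p ` W)) p"
      unfolding mkernel_def K_def by simp
  qed simp_all
  then show ?thesis using G_extension ker img unfolding K_def by blast
qed

lemma G_trivial: "rmodule M \<Longrightarrow> G (sub M {mzero M})"
proof -
  assume M: "rmodule M"
  obtain B where B: "G B" using G_nonempty by blast
  obtain C where C: "G C" "miso C (quot B (mcarrier B))"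
    using G_quot[OF B submodule_carrier[OF G_rmodule[OF B]]] unfolding in_class_def by blast
  have "mcarrier C = {mzero C}"
    using trivial_if_miso_quot_self[OF G_rmodule[OF C(1)] G_rmodule[OF B] C(2)] .
  then show ?thesis using G_miso[OF C(1) miso_trivial[OF G_rmodule[OF C(1)] _ M]] by blast
qed

lemma strict_subobject_trivial: "G M \<Longrightarrow> strict_subobject G M {mzero M}"
  unfolding strict_subobject_def subobject_def
  using submodule_trivial[OF G_rmodule] G_trivial[OF G_rmodule] submodule_mzero
  by (metis Int_insert_left_if1 inf_bot_left)

lemma subobject_carrier: "G M \<Longrightarrow> subobject G M (mcarrier M)"
  unfolding subobject_def using submodule_carrier[OF G_rmodule] by simp

lemma strict_subobject_carrier: "G M \<Longrightarrow> strict_subobject G M (mcarrier M)"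
  unfolding strict_subobject_def using subobject_carrier
  by (metis Int_absorb1 subobject_def submodule_subset)

lemma strict_subobject_preimage:
  assumes Y: "G Y" and Q: "G Q" and p: "quotient_map Y Q p S" and S: "strict_subobject G Y S"
    and K: "strict_subobject G Q K"
  shows "strict_subobject G Y {y \<in> mcarrier Y. p y \<in> K}" (is "strict_subobject G Y ?T")
proof -
  have Yr: "rmodule Y" and Qr: "rmodule Q" using G_rmodule Y Q by auto
  have hom: "mhom Y Q p" and ker: "{x \<in> mcarrier Y. p x = mzero Q} = S"
    using p unfolding quotient_map_def by auto
  have T: "submodule Y ?T" using submodule_preimage[OF Yr Qr hom strict_subobject_submodule[OF K]] .
  have Int: "G (sub Y (?T \<inter> B))" if B: "subobject G Y B" for B
  proof -
    have Bsm: "submodule Y B" using B unfolding subobject_def by blast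
    have "{x \<in> ?T \<inter> B. p x = mzero Q} = S \<inter> B"
      using ker submodule_mzero[OF strict_subobject_submodule[OF K]] by auto
    moreover have "G (sub Y (S \<inter> B))" using strict_subobject_Int[OF S B] .
    moreover have "G (sub Q (p ` B))"
      using G_image_sub[OF Bsm _ Qr hom] B unfolding subobject_def by blast
    then have "G (sub Q (K \<inter> p ` B))"
      using strict_subobject_Int[OF K] submodule_image[OF Yr Qr hom Bsm]
      unfolding subobject_def by blast
    moreover have "p ` (?T \<inter> B) = K \<inter> p ` B" using submodule_subset[OF Bsm] by auto
    ultimately show ?thesis using G_extension_kernel[OF Yr submodule_Int[OF T Bsm] Qr hom] by simp
  qed
  have "?T \<inter> mcarrier Y = ?T" by auto
  then have "subobject G Y ?T"
    unfolding subobject_def using T Int[OF subobject_carrier[OF Y]] by simp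
  with Int show ?thesis unfolding strict_subobject_def by blast
qed

lemma strict_subobject_image:
  assumes Y: "G Y" and Q: "G Q" and p: "quotient_map Y Q p K" and K: "G (sub Y K)"
    and T: "strict_subobject G Y T"
  shows "strict_subobject G Q (p ` T)"
proof -
  have Yr: "rmodule Y" and Qr: "rmodule Q" using G_rmodule Y Q by auto
  have hom: "mhom Y Q p" and surj: "p ` mcarrier Y = mcarrier Q"
    and ker: "{x \<in> mcarrier Y. p x = mzero Q} = K"
    using p unfolding quotient_map_def by auto
  have Tsm: "submodule Y T" using strict_subobject_submodule[OF T] .
  show ?thesis
    unfolding strict_subobject_def subobject_def
  proof (intro conjI allI impI)
    show "submodule Q (p ` T)" using submodule_image[OF Yr Qr hom Tsm] .
    show "G (sub Q (p ` T))" using G_image_sub[OF Tsm strict_subobject_G[OF T] Qr hom] .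
    fix Q' assume Q': "submodule Q Q' \<and> G (sub Q Q')"
    define N where "N = {y \<in> mcarrier Y. p y \<in> Q'}"
    have N: "submodule Y N" unfolding N_def using submodule_preimage[OF Yr Qr hom] Q' by blast
    have "{x \<in> N. p x = mzero Q} = K" using ker submodule_mzero[of Q Q'] Q' unfolding N_def by auto
    moreover have "p ` N = Q'" unfolding N_def using surj submodule_subset[of Q Q'] Q' by auto
    ultimately have "subobject G Y N" using G_extension_kernel[OF Yr N Qr hom] K Q' N
      unfolding subobject_def by simp
    then have "G (sub Y (T \<inter> N))" using strict_subobject_Int[OF T] by blast
    moreover have "p ` (T \<inter> N) = p ` T \<inter> Q'" unfolding N_def using submodule_subset[OF Tsm] by auto
    ultimately show "G (sub Q (p ` T \<inter> Q'))"
      using G_image_sub[OF submodule_Int[OF Tsm N] _ Qr hom] by metis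
  qed
qed

end

section \<open>Strict filtrations\<close>

definition strict_factor ::
  "(('r::ring_1, 'm) rmod \<Rightarrow> bool) \<Rightarrow> (('r, 'm) rmod \<Rightarrow> bool) \<Rightarrow> ('r, 'a) rmod \<Rightarrow> bool" where
  "strict_factor G X F \<longleftrightarrow> (\<exists>Y S. X Y \<and> strict_subobject G Y S \<and> miso F (quot Y S))"

definition strict_chain ::
  "(('r::ring_1, 'm) rmod \<Rightarrow> bool) \<Rightarrow> (('r, 'm) rmod \<Rightarrow> bool) \<Rightarrow> ('r, 'm) rmod \<Rightarrow> nat \<Rightarrow>
   (nat \<Rightarrow> 'm set) \<Rightarrow> bool" where
  "strict_chain G X M k Ms \<longleftrightarrow>
     (\<forall>i\<le>k. strict_subobject G M (Ms i)) \<and> (\<forall>i<k. Ms i \<subseteq> Ms (Suc i)) \<and>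
     (\<forall>i<k. strict_factor G X (quot (sub M (Ms (Suc i))) (Ms i)))"

lemma Filt_iff:
  "Filt G X M \<longleftrightarrow> G M \<and> (\<exists>k Ms. Ms 0 = {mzero M} \<and> Ms k = mcarrier M \<and> strict_chain G X M k Ms)"
  unfolding Filt_def strict_chain_def strict_factor_def by blast

lemma strict_factor_miso: "miso F F' \<Longrightarrow> strict_factor G X F' \<Longrightarrow> strict_factor G X F"
  unfolding strict_factor_def using miso_trans by blast

lemma strict_chain_append:
  assumes A: "strict_chain G X M k As" and C: "strict_chain G X M l Cs" and join: "As k = Cs 0"
  shows "strict_chain G X M (k + l) (\<lambda>i. if i \<le> k then As i else Cs (i - k))"
    (is "strict_chain G X M _ ?Ms")
proof -
  have step: "?Ms i \<subseteq> ?Ms (Suc i) \<and> strict_factor G X (quot (sub M (?Ms (Suc i))) (?Ms i))"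
    if i: "i < k + l" for i
  proof -
    consider "Suc i \<le> k" | "i = k" | "k < i" by linarith
    then show ?thesis
    proof cases
      case 3
      then have "Suc i - k = Suc (i - k)" by simp
      then show ?thesis using 3 i C unfolding strict_chain_def by auto
    qed (use A C i join in \<open>auto simp: strict_chain_def\<close>)
  qed
  show ?thesis
    unfolding strict_chain_def using step A C by (auto simp: strict_chain_def)
qed

lemma strict_chain_lift:
  "strict_chain G X (sub B W) k Ms \<Longrightarrow> strict_subobject G B W \<Longrightarrow> strict_chain G X B k Ms"
  unfolding strict_chain_def using strict_subobject_trans by (metis sub_simps(5))

context torsion_setting
begin

lemma strict_quotient_trans:
  assumes Y: "G Y" and S: "strict_subobject G Y S" and Q: "G Q" and iso: "miso Q (quot Y S)"
    and F: "rmodule F" and t: "quotient_map Q F t K" and K: "strict_subobject G Q K"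
  shows "\<exists>S'. strict_subobject G Y S' \<and> miso F (quot Y S')"
proof -
  have Yr: "rmodule Y" using G_rmodule[OF Y] .
  obtain q where q: "quotient_map Y Q q S"
    using quotient_map_if_miso_quot[OF G_rmodule[OF Q] Yr strict_subobject_submodule[OF S] iso]
    by blast
  let ?S' = "{y \<in> mcarrier Y. q y \<in> K}"
  have "quotient_map Y F (\<lambda>y. t (q y)) ?S'" using quotient_map_comp[OF q t] .
  then have "miso F (quot Y ?S')"
    using miso_sym miso_quot_quotient_map[OF Yr F] rmodule_quot[OF Yr]
      quotient_map_kernel_submodule[OF _ Yr F]
    by blast
  moreover have "strict_subobject G Y ?S'" using strict_subobject_preimage[OF Y Q q S K] .
  ultimately show ?thesis by blast
qed

lemma strict_exact_inclusion:
  assumes U: "strict_subobject G M U" and W: "strict_subobject G M W" and UW: "U \<subseteq> W"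
    and C: "G C" and g: "quotient_map (sub M W) C g U"
  shows "strict_exact G (sub M U) (sub M W) C (\<lambda>x. x) g"
  unfolding strict_exact_def short_exact_def
proof (intro conjI)
  show "G (sub M U)" "G (sub M W)" using strict_subobject_G U W by auto
  then show "rmodule (sub M U)" "rmodule (sub M W)" using G_rmodule by auto
  show "G C" "rmodule C" using C G_rmodule by auto
  show "mhom (sub M U) (sub M W) (\<lambda>x. x)" unfolding mhom_def using UW by auto
  show "mhom (sub M W) C g" "g ` mcarrier (sub M W) = mcarrier C"
    "(\<lambda>x. x) ` mcarrier (sub M U) = mkernel (sub M W) C g"
    using g unfolding quotient_map_def mkernel_def by auto
  show "strict_subobject G (sub M W) ((\<lambda>x. x) ` mcarrier (sub M U))"
    using strict_subobject_restrict[OF U _ UW] W unfolding strict_subobject_def by simp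
qed simp

end

locale filt_setting = torsion_setting +
  fixes X :: "('r::ring_1, 'm) rmod \<Rightarrow> bool"
  assumes X_G: "X M \<Longrightarrow> G M"
begin

lemma strict_factor_image:
  assumes A: "G A" and C: "G C" and \<pi>: "quotient_map A C \<pi> S" and S: "strict_subobject G A S"
    and M0: "strict_subobject G A M0" and M1: "strict_subobject G A M1" and M0M1: "M0 \<subseteq> M1"
    and factor: "strict_factor G X (quot (sub A M1) M0)"
  shows "strict_factor G X (quot (sub C (\<pi> ` M1)) (\<pi> ` M0))"
proof -
  have Ar: "rmodule A" and Cr: "rmodule C" using G_rmodule A C by auto
  have M1sm: "submodule A M1" and M0sm: "submodule A M0"
    using strict_subobject_submodule M0 M1 by auto
  have A1: "G (sub A M1)" using strict_subobject_G[OF M1] .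
  have M0A1: "submodule (sub A M1) M0"
    using submodule_sub_iff[OF submodule_subset[OF M1sm]] M0M1 M0sm by blast
  obtain Q p where Q: "G Q" "quotient_map (sub A M1) Q p M0" "miso Q (quot (sub A M1) M0)"
    using quotient_map_onto_G[OF A1 M0A1] by blast
  have "strict_subobject G (sub A M1) (S \<inter> M1)"
    using strict_subobject_Int_restrict[OF S] M1 unfolding strict_subobject_def by blast
  then have K: "strict_subobject G Q (p ` (S \<inter> M1))"
    using strict_subobject_image[OF A1 Q(1,2)] strict_subobject_G[OF M0] by simp
  obtain t where t: "quotient_map Q (quot (sub C (\<pi> ` M1)) (\<pi> ` M0)) t (p ` (S \<inter> M1))"
    using quotient_map_onto_image_quot[OF Ar Cr \<pi> M1sm M0sm M0M1 G_rmodule[OF Q(1)] Q(2)] by blast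
  obtain Y S0 where Y: "X Y" "strict_subobject G Y S0" "miso (quot (sub A M1) M0) (quot Y S0)"
    using factor unfolding strict_factor_def by blast
  have "miso Q (quot Y S0)" using miso_trans[OF Q(3) Y(3)] .
  moreover have "rmodule (quot (sub C (\<pi> ` M1)) (\<pi> ` M0))"
    using \<pi> rmodule_quot[OF rmodule_sub[OF Cr] submodule_image_sub[OF Ar Cr _ M1sm M0sm M0M1]]
      submodule_image[OF Ar Cr _ M1sm] unfolding quotient_map_def by blast
  ultimately show ?thesis
    using strict_quotient_trans[OF X_G[OF Y(1)] Y(2) Q(1) _ _ t K] Y(1)
    unfolding strict_factor_def by blast
qed

end

context filt_setting
begin

lemma strict_chain_image:
  assumes A: "G A" and C: "G C" and \<pi>: "quotient_map A C \<pi> S" and S: "strict_subobject G A S"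
    and chain: "strict_chain G X A k Ms"
  shows "strict_chain G X C k (\<lambda>i. \<pi> ` Ms i)"
  unfolding strict_chain_def
proof (intro conjI allI impI)
  fix i
  show "strict_subobject G C (\<pi> ` Ms i)" if "i \<le> k"
    using strict_subobject_image[OF A C \<pi> strict_subobject_G[OF S]] chain that
    unfolding strict_chain_def by blast
  assume "i < k"
  then show "\<pi> ` Ms i \<subseteq> \<pi> ` Ms (Suc i)"
    and "strict_factor G X (quot (sub C (\<pi> ` Ms (Suc i))) (\<pi> ` Ms i))"
    using chain strict_factor_image[OF A C \<pi> S]
    unfolding strict_chain_def by (auto simp: image_mono)
qed

lemma strict_chain_preimage:
  assumes B: "G B" and C: "G C" and g: "quotient_map B C g W" and W: "strict_subobject G B W"
    and chain: "strict_chain G X C k Cs"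
  shows "strict_chain G X B k (\<lambda>j. {b \<in> mcarrier B. g b \<in> Cs j})"
  unfolding strict_chain_def
proof (intro conjI allI impI)
  fix j
  have Br: "rmodule B" and Cr: "rmodule C" using G_rmodule B C by auto
  have hom: "mhom B C g" and surj: "g ` mcarrier B = mcarrier C"
    using g unfolding quotient_map_def by auto
  show "strict_subobject G B {b \<in> mcarrier B. g b \<in> Cs j}" if "j \<le> k"
    using strict_subobject_preimage[OF B C g W] chain that unfolding strict_chain_def by blast
  assume j: "j < k"
  then have "strict_subobject G C (Cs (Suc j))" "Cs j \<subseteq> Cs (Suc j)" "strict_subobject G C (Cs j)"
    and factor: "strict_factor G X (quot (sub C (Cs (Suc j))) (Cs j))"
    using chain unfolding strict_chain_def by auto
  then have Cs: "submodule C (Cs (Suc j))" "Cs j \<subseteq> Cs (Suc j)" "submodule C (Cs j)"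
    using strict_subobject_submodule by auto
  let ?pre = "\<lambda>j. {b \<in> mcarrier B. g b \<in> Cs j}"
  show "?pre j \<subseteq> ?pre (Suc j)" using Cs by auto
  have qm: "quotient_map (sub B (?pre (Suc j))) (sub C (Cs (Suc j))) g
              {x \<in> ?pre (Suc j). g x = mzero C}"
    unfolding quotient_map_def
  proof (intro conjI)
    show "mhom (sub B (?pre (Suc j))) (sub C (Cs (Suc j))) g" by (rule mhom_restrict[OF hom]) auto
    show "g ` mcarrier (sub B (?pre (Suc j))) = mcarrier (sub C (Cs (Suc j)))"
      using surj submodule_subset[OF Cs(1)] by auto
  qed simp
  have V: "submodule (sub C (Cs (Suc j))) (Cs j)"
    using submodule_sub_iff[OF submodule_subset[OF Cs(1)]] Cs by blast
  have eq: "{x \<in> mcarrier (sub B (?pre (Suc j))). g x \<in> Cs j} = ?pre j" using Cs by auto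
  have "miso (quot (sub B (?pre (Suc j))) (?pre j)) (quot (sub C (Cs (Suc j))) (Cs j))"
    using miso_quot_preimage[OF rmodule_sub[OF Br submodule_preimage[OF Br Cr hom Cs(1)]]
        rmodule_sub[OF Cr Cs(1)] qm V]
    unfolding eq .
  then show "strict_factor G X (quot (sub B (?pre (Suc j))) (?pre j))"
    using strict_factor_miso factor by blast
qed

lemma Filt_if_X: "X M \<Longrightarrow> Filt G X M"
proof -
  assume XM: "X M"
  then have M: "G M" using X_G by blast
  define Ms where "Ms i = (if i = 0 then {mzero M} else mcarrier M)" for i :: nat
  have "miso (quot M {mzero M}) (quot M {mzero M})"
    using miso_refl rmodule_quot[OF G_rmodule[OF M] submodule_trivial[OF G_rmodule[OF M]]] by blast
  then have "strict_factor G X (quot (sub M (Ms 1)) (Ms 0))"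
    unfolding strict_factor_def Ms_def using XM strict_subobject_trivial[OF M] by auto
  moreover have "strict_subobject G M (Ms i)" for i
    unfolding Ms_def using strict_subobject_trivial[OF M] strict_subobject_carrier[OF M] by simp
  moreover have "Ms 0 \<subseteq> Ms 1" unfolding Ms_def using mzero_closed[OF G_rmodule[OF M]] by simp
  ultimately have "strict_chain G X M 1 Ms" unfolding strict_chain_def by simp
  moreover have "Ms 0 = {mzero M}" "Ms 1 = mcarrier M" by (simp_all add: Ms_def)
  ultimately show ?thesis unfolding Filt_iff using M by blast
qed

lemma Filt_nonempty: "\<exists>M. Filt G X M"
proof -
  obtain B where "G B" using G_nonempty by blast
  then have Z: "G (sub B {mzero B})" using G_trivial G_rmodule by blast
  then have "strict_chain G X (sub B {mzero B}) 0 (\<lambda>_. {mzero B})"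
    unfolding strict_chain_def using strict_subobject_trivial[OF Z] by simp
  then have "Filt G X (sub B {mzero B})"
    unfolding Filt_iff using Z by (intro conjI exI[of _ 0] exI[of _ "\<lambda>_. {mzero B}"]) simp_all
  then show ?thesis by blast
qed

lemma Filt_strict_quotient:
  assumes A: "Filt G X A" and S: "strict_subobject G A S"
  shows "in_class (Filt G X) (quot A S)"
proof -
  obtain k Ms where GA: "G A"
    and Ms: "Ms 0 = {mzero A}" "Ms k = mcarrier A" "strict_chain G X A k Ms"
    using A unfolding Filt_iff by blast
  obtain C \<pi> where C: "G C" "quotient_map A C \<pi> S" "miso C (quot A S)"
    using quotient_map_onto_G[OF GA strict_subobject_submodule[OF S]] by blast
  have hom: "mhom A C \<pi>" and surj: "\<pi> ` mcarrier A = mcarrier C"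
    using C(2) unfolding quotient_map_def by auto
  have "Filt G X C"
    unfolding Filt_iff
  proof (intro conjI exI[of _ k] exI[of _ "\<lambda>i. \<pi> ` Ms i"])
    show "\<pi> ` Ms 0 = {mzero C}"
      using Ms(1) mhom_mzero[OF G_rmodule[OF GA] G_rmodule[OF C(1)] hom] by simp
    show "\<pi> ` Ms k = mcarrier C" using Ms(2) surj by simp
  qed (use C(1) strict_chain_image[OF GA C(1,2) S Ms(3)] in auto)
  then show ?thesis unfolding in_class_def using C(3) by blast
qed

lemma Filt_strict_extension:
  assumes ex: "strict_exact G A B C f g" and FA: "Filt G X A" and FC: "Filt G X C"
  shows "Filt G X B"
proof -
  have GA: "G A" and GB: "G B" and GC: "G C" and W: "strict_subobject G B (f ` mcarrier A)"
    and sex: "short_exact A B C f g" using ex unfolding strict_exact_def by auto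
  have Ar: "rmodule A" and Br: "rmodule B" using G_rmodule GA GB by auto
  have f: "mhom A B f" "inj_on f (mcarrier A)" and g: "quotient_map B C g (f ` mcarrier A)"
    using sex unfolding short_exact_def quotient_map_def mkernel_def by auto
  obtain ka As where As: "As 0 = {mzero A}" "As ka = mcarrier A" "strict_chain G X A ka As"
    using FA unfolding Filt_iff by blast
  obtain kc Cs where Cs: "Cs 0 = {mzero C}" "Cs kc = mcarrier C" "strict_chain G X C kc Cs"
    using FC unfolding Filt_iff by blast
  have "mhom A (sub B (f ` mcarrier A)) f"
    using mhom_restrict[OF f(1) order_refl order_refl] by simp
  then have "quotient_map A (sub B (f ` mcarrier A)) f {mzero A}"
    using quotient_map_bij[OF _ _ Ar rmodule_sub[OF Br strict_subobject_submodule[OF W]]] f(2)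
    by (simp add: bij_betw_def)
  then have lower: "strict_chain G X B ka (\<lambda>i. f ` As i)"
    using strict_chain_image[OF GA strict_subobject_G[OF W] _ strict_subobject_trivial[OF GA] As(3)]
      strict_chain_lift W by blast
  have upper: "strict_chain G X B kc (\<lambda>j. {b \<in> mcarrier B. g b \<in> Cs j})"
    using strict_chain_preimage[OF GB GC g W Cs(3)] .
  define Bs where "Bs i = (if i \<le> ka then f ` As i else {b \<in> mcarrier B. g b \<in> Cs (i - ka)})" for i
  have join: "f ` As ka = {b \<in> mcarrier B. g b \<in> Cs 0}"
    using As(2) Cs(1) g unfolding quotient_map_def by auto
  then have chain: "strict_chain G X B (ka + kc) Bs"
    unfolding Bs_def by (rule strict_chain_append[OF lower upper])
  have "Bs 0 = {mzero B}" using As(1) mhom_mzero[OF Ar Br f(1)] unfolding Bs_def by simp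
  moreover have "{b \<in> mcarrier B. g b \<in> Cs kc} = mcarrier B"
    using Cs(2) g mhom_closed unfolding quotient_map_def by blast
  then have "Bs (ka + kc) = mcarrier B" using join unfolding Bs_def by (cases "kc = 0") auto
  ultimately show ?thesis unfolding Filt_iff using GB chain by blast
qed

lemma pseudo_torsion_class_Filt: "pseudo_torsion_class G (Filt G X)"
  unfolding pseudo_torsion_class_def
proof (intro conjI allI impI)
  show "Filt G X M \<Longrightarrow> G M" for M unfolding Filt_def by blast
qed (use Filt_nonempty Filt_strict_quotient Filt_strict_extension in blast)+

end

locale pseudo_torsion_setting = torsion_setting +
  fixes P :: "('r::ring_1, 'm) rmod \<Rightarrow> bool"
  assumes pseudo_torsion: "pseudo_torsion_class G P"
begin

lemma P_G: "P M \<Longrightarrow> G M"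
  using pseudo_torsion unfolding pseudo_torsion_class_def by blast

lemma P_strict_extension: "P A \<Longrightarrow> P C \<Longrightarrow> strict_exact G A B C f g \<Longrightarrow> P B"
  using pseudo_torsion unfolding pseudo_torsion_class_def by blast

lemma P_strict_quotient: "P A \<Longrightarrow> strict_subobject G A S \<Longrightarrow> in_class P (quot A S)"
  using pseudo_torsion unfolding pseudo_torsion_class_def by blast

lemma P_trivial_ex: "\<exists>Z. P Z \<and> mcarrier Z = {mzero Z}"
proof -
  obtain A where A: "P A" using pseudo_torsion unfolding pseudo_torsion_class_def by blast
  obtain Z where Z: "P Z" "miso Z (quot A (mcarrier A))"
    using P_strict_quotient[OF A strict_subobject_carrier[OF P_G[OF A]]]
    unfolding in_class_def by blast
  then show ?thesis
    using trivial_if_miso_quot_self[OF G_rmodule[OF P_G[OF Z(1)]] G_rmodule[OF P_G[OF A]]] by blast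
qed

text \<open>P is not assumed to be closed under isomorphism, but D is a strict extension of C by the
  zero module.\<close>

lemma P_miso:
  assumes C: "P C" and iso: "miso C D"
  shows "P D"
proof -
  obtain Z where Z: "P Z" "mcarrier Z = {mzero Z}" using P_trivial_ex by blast
  have GD: "G D" using G_miso[OF P_G[OF C] iso] .
  have Cr: "rmodule C" and Dr: "rmodule D" using G_rmodule P_G C GD by auto
  obtain f where f: "mhom C D f" "bij_betw f (mcarrier C) (mcarrier D)"
    using iso unfolding miso_def by blast
  have g: "quotient_map D C (inv_into (mcarrier C) f) {mzero D}"
    using quotient_map_bij[OF mhom_inv_into[OF f Cr] bij_betw_inv_into[OF f(2)] Dr Cr] .
  have "strict_exact G Z D C (\<lambda>_. mzero D) (inv_into (mcarrier C) f)"
    unfolding strict_exact_def short_exact_def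
  proof (intro conjI)
    show "G Z" "G D" "G C" using P_G Z C GD by auto
    then show "rmodule Z" "rmodule D" "rmodule C" using G_rmodule by auto
    show "mhom Z D (\<lambda>_. mzero D)"
      unfolding mhom_def
      using mzero_closed[OF Dr] madd_mzero_left[OF Dr mzero_closed[OF Dr]] mzero_msmult[OF Dr]
      by simp
    show "inj_on (\<lambda>_. mzero D) (mcarrier Z)" using Z(2) by simp
    show "mhom D C (inv_into (mcarrier C) f)" "inv_into (mcarrier C) f ` mcarrier D = mcarrier C"
      "(\<lambda>_. mzero D) ` mcarrier Z = mkernel D C (inv_into (mcarrier C) f)"
      using g Z(2) unfolding quotient_map_def mkernel_def by auto
    show "strict_subobject G D ((\<lambda>_. mzero D) ` mcarrier Z)"
      using strict_subobject_trivial[OF GD] Z(2) by simp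
  qed
  then show ?thesis using P_strict_extension[OF Z(1) C] by blast
qed

lemma P_trivial: "rmodule M \<Longrightarrow> P (sub M {mzero M})"
  using P_trivial_ex P_miso miso_trivial G_rmodule P_G by metis

lemma P_strict_chain:
  assumes XP: "\<And>M. X M \<Longrightarrow> P M" and chain: "strict_chain G X M k Ms" and bottom: "P (sub M (Ms 0))"
  shows "P (sub M (Ms k))"
proof -
  have "P (sub M (Ms i))" if "i \<le> k" for i
    using that
  proof (induction i)
    case (Suc i)
    then have U: "strict_subobject G M (Ms i)" and W: "strict_subobject G M (Ms (Suc i))"
      and UW: "Ms i \<subseteq> Ms (Suc i)" and factor: "strict_factor G X (quot (sub M (Ms (Suc i))) (Ms i))"
      using chain unfolding strict_chain_def by auto
    have GW: "G (sub M (Ms (Suc i)))" using strict_subobject_G[OF W] .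
    have sm: "submodule (sub M (Ms (Suc i))) (Ms i)"
      using submodule_sub_iff[OF submodule_subset] strict_subobject_submodule U W UW by blast
    obtain Y S where Y: "X Y" "strict_subobject G Y S"
      "miso (quot (sub M (Ms (Suc i))) (Ms i)) (quot Y S)"
      using factor unfolding strict_factor_def by blast
    obtain C where C: "P C" "miso C (quot Y S)"
      using P_strict_quotient[OF XP[OF Y(1)] Y(2)] unfolding in_class_def by blast
    have "miso C (quot (sub M (Ms (Suc i))) (Ms i))"
      using miso_trans[OF C(2) miso_sym[OF rmodule_quot[OF G_rmodule[OF GW] sm] Y(3)]] .
    then obtain g where "quotient_map (sub M (Ms (Suc i))) C g (Ms i)"
      using quotient_map_if_miso_quot[OF G_rmodule[OF P_G[OF C(1)]] G_rmodule[OF GW] sm] by blast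
    then show ?case
      using P_strict_extension[OF _ C(1) strict_exact_inclusion[OF U W UW P_G[OF C(1)]]] Suc by simp
  qed (use bottom in simp)
  then show ?thesis by simp
qed

lemma Filt_imp_P: "(\<And>M. X M \<Longrightarrow> P M) \<Longrightarrow> Filt G X M \<Longrightarrow> P M"
  unfolding Filt_iff using P_strict_chain P_trivial G_rmodule by (metis sub_simps(6))

end

theorem mainTheorem10:
  fixes alg :: "'k::field \<Rightarrow> 'r::ring_1"
    and G X :: "('r, 'm) rmod \<Rightarrow> bool"
  assumes "fin_dim_algebra alg"
    and "torsion_class G"
    and "\<forall>M. X M \<longrightarrow> G M"
  shows "pseudo_torsion_class G (Filt G X) \<and>
         (\<forall>M. X M \<longrightarrow> Filt G X M) \<and>
         (\<forall>P. pseudo_torsion_class G P \<and> (\<forall>M. X M \<longrightarrow> P M) \<longrightarrow> (\<forall>M. Filt G X M \<longrightarrow> P M))"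
proof -
  interpret filt_setting G X
    using assms(2,3) by unfold_locales auto
  have "pseudo_torsion_setting G P" if "pseudo_torsion_class G P" for P
    using assms(2) that by unfold_locales
  then show ?thesis
    using pseudo_torsion_class_Filt Filt_if_X pseudo_torsion_setting.Filt_imp_P by blast
qed

end
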